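(* Let $n\geq 2$ and let $(x_i,y_i)_{i=1}^n$ be labeled examples with $x_i\in\mathbb{R}^d$, $y_i\in\{-1,+1\}$, $\max_i\|x_i\|\leq 1$. Let $X=[x_1,\dots,x_n]$, $\sigma^2\geq\frac{1}{n}\|X\|^2$ (spectral norm), $\lambda>0$, $b\in\{1,\dots,n\}$, and $\beta_b := 1+\frac{(b-1)(n\sigma^2-1)}{n-1}$. Define the primal objective $P(w) := \frac{1}{n}\sum_{i=1}^n\max\{0,1-y_i\langle w,x_i\rangle\}+\frac{\lambda}{2}\|w\|^2$ with minimizer $w^*$, the dual objective $D(\alpha) := -\frac{1}{2\lambda n^2}\alpha^\top Q\alpha + \frac{1}{n}\sum_{i=1}^n\alpha_i$ for $\alpha\in[0,1]^n$, where $Q_{ij} = y_iy_j\langle x_i,x_j\rangle$, and $w(\alpha) := \frac{1}{\lambda n}\sum_{i=1}^n\alpha_iy_ix_i$. Consider mini-batched SDCA: $\alpha^{(0)}=0$, and for $t=0,1,2,\dots$, draw $A_t$ uniformly at random among subsets of $\{1,\dots,n\}$ of cardinality $b$ (independently across iterations), and set $$\alpha^{(t+1)}_i = \alpha^{(t)}_i + \mathrm{clip}_{[-\alpha_i^{(t)},\,1-\alpha_i^{(t)}]}\left(\frac{\lambda n\big(1-y_i\langle w(\alpha^{(t)}),x_i\rangle\big)}{\beta_b}\right)\ \text{ for } i\in A_t,\qquad \alpha^{(t+1)}_j=\alpha^{(t)}_j\ \text{ for } j\notin A_t,$$ where $\mathrm{clip}_I$ denotes projection onto the interval $I$. Let $\epsilon>0$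 and let integers $t_0, T_0, T$ satisfy $$t_0\geq\max\Big\{0,\Big\lceil\frac{n}{b}\log\Big(\frac{2\lambda n}{\beta_b}\Big)\Big\rceil\Big\},\quad T_0\geq t_0+\frac{\beta_b}{b}\Big[\frac{4}{\lambda\epsilon}-\frac{2n}{\beta_b}\Big]_+,\quad T\geq T_0+\max\Big\{\Big\lceil\frac{n}{b}\Big\rceil,\frac{\beta_b}{b}\frac{1}{\lambda\epsilon}\Big\},$$ where $[z]_+=\max\{0,z\}$, and let $\bar\alpha := \frac{1}{T-T_0}\sum_{t=T_0}^{T-1}\alpha^{(t)}$. Then $$\mathbb{E}[P(w(\bar\alpha))] - P(w^* ) \leq \mathbb{E}[P(w(\bar\alpha)) - D(\bar\alpha)] \leq \epsilon.$$
   Context: $\|X\|$ is the spectral norm of $X$; the expectation is over the random mini-batches. *)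

theory Defs
  imports "HOL-Analysis.Analysis" "HOL-Probability.Probability"
begin

text \<open>Examples are indexed by a finite type 'n, so n = CARD('n); features live in a
  Euclidean space 'd (= R^d).\<close>

definition clip :: "real \<Rightarrow> real \<Rightarrow> real \<Rightarrow> real" where
  "clip lo hi z = max lo (min hi z)"

definition spectral_norm :: "('n::finite \<Rightarrow> 'd::euclidean_space) \<Rightarrow> real" where
  "spectral_norm x = onorm (\<lambda>a::real^'n. \<Sum>i\<in>UNIV. (a $ i) *\<^sub>R x i)"

definition primal :: "('n::finite \<Rightarrow> 'd::euclidean_space) \<Rightarrow> ('n \<Rightarrow> real) \<Rightarrow> real \<Rightarrow> 'd \<Rightarrow> real" where
  "primal x y lam w =
     (1 / real CARD('n)) * (\<Sum>i\<in>UNIV. max 0 (1 - y i * (w \<bullet> x i))) + lam / 2 * (norm w)\<^sup>2"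

definition dual :: "('n::finite \<Rightarrow> 'd::euclidean_space) \<Rightarrow> ('n \<Rightarrow> real) \<Rightarrow> real \<Rightarrow> ('n \<Rightarrow> real) \<Rightarrow> real" where
  "dual x y lam \<alpha> =
     - (1 / (2 * lam * (real CARD('n))\<^sup>2)) *
         (\<Sum>i\<in>UNIV. \<Sum>j\<in>UNIV. \<alpha> i * (y i * y j * (x i \<bullet> x j)) * \<alpha> j)
     + (1 / real CARD('n)) * (\<Sum>i\<in>UNIV. \<alpha> i)"

definition wmap :: "('n::finite \<Rightarrow> 'd::euclidean_space) \<Rightarrow> ('n \<Rightarrow> real) \<Rightarrow> real \<Rightarrow> ('n \<Rightarrow> real) \<Rightarrow> 'd" where
  "wmap x y lam \<alpha> = (1 / (lam * real CARD('n))) *\<^sub>R (\<Sum>i\<in>UNIV. (\<alpha> i * y i) *\<^sub>R x i)"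

text \<open>Mini-batch SDCA iterates, driven by a sequence of batches As t = A_t.\<close>
primrec sdca_iter :: "('n::finite \<Rightarrow> 'd::euclidean_space) \<Rightarrow> ('n \<Rightarrow> real) \<Rightarrow> real \<Rightarrow> real
    \<Rightarrow> (nat \<Rightarrow> 'n set) \<Rightarrow> nat \<Rightarrow> ('n \<Rightarrow> real)" where
  "sdca_iter x y lam beta As 0 = (\<lambda>_. 0)"
| "sdca_iter x y lam beta As (Suc t) =
     (\<lambda>i. let a = sdca_iter x y lam beta As t in
        if i \<in> As t
        then a i + clip (- a i) (1 - a i)
               (lam * real CARD('n) * (1 - y i * (wmap x y lam a \<bullet> x i)) / beta)
        else a i)"

definition batch_pmf :: "nat \<Rightarrow> ('n::finite) set pmf" where
  "batch_pmf b = pmf_of_set {A::'n set. card A = b}"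

definition schedule_pmf :: "nat \<Rightarrow> nat \<Rightarrow> (nat \<Rightarrow> ('n::finite) set) pmf" where
  "schedule_pmf b T = Pi_pmf {..<T} {} (\<lambda>_. batch_pmf b)"

definition alpha_bar :: "('n::finite \<Rightarrow> 'd::euclidean_space) \<Rightarrow> ('n \<Rightarrow> real) \<Rightarrow> real \<Rightarrow> real
    \<Rightarrow> nat \<Rightarrow> nat \<Rightarrow> (nat \<Rightarrow> 'n set) \<Rightarrow> ('n \<Rightarrow> real)" where
  "alpha_bar x y lam beta T0 T As =
     (\<lambda>i. (1 / real (T - T0)) * (\<Sum>t\<in>{T0..<T}. sdca_iter x y lam beta As t i))"

end

theory Submission
  imports Defs
begin

(* The first inequality is weak duality. For the second, the decisive estimate is an expected
   separable overapproximation: for a uniformly random batch A of size b,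
     E ||sum_{i in A} h_i y_i x_i||^2 <= (b/n) beta_b sum_i h_i^2,
   where beta_b interpolates between the row bound ||x_i|| <= 1 and the spectral bound on X.
   Hence the expected dual increase of a mini-batch step is at least b/n times a separable concave
   quadratic, which the clipped coordinate steps maximise. Comparing them with the feasible steps
   s (u_i - alpha_i), where u is the hinge-loss subgradient at w(alpha), gives for all s in [0,1]
     E D(alpha^(t+1)) - E D(alpha^(t)) >= (b/n) (s E[gap_t] - s^2 beta_b / (2 lambda n)).
   This recursion makes the dual suboptimality decay geometrically until t0 and like 1/t until T0;
   summing it over [T0, T) with the constant s = n / (b (T - T0)) telescopes into a bound on the
   mean expected gap, and convexity of the gap transfers it to the averaged iterate. *)

section \<open>Uniformly random batches\<close>

lemma card_supersets_of_card:
  fixes I :: "'n::finite set"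
  assumes "card I \<le> b"
  shows "card {A::'n set. card A = b \<and> I \<subseteq> A} = (CARD('n) - card I) choose (b - card I)"
proof -
  have inj: "inj_on (\<lambda>B. B \<union> I) {B. B \<subseteq> - I \<and> card B = b - card I}"
    by (rule inj_onI) auto
  have eq: "{A::'n set. card A = b \<and> I \<subseteq> A} = (\<lambda>B. B \<union> I) ` {B. B \<subseteq> - I \<and> card B = b - card I}"
  proof (rule set_eqI, rule iffI)
    fix A assume "A \<in> {A::'n set. card A = b \<and> I \<subseteq> A}"
    then have "A = (A - I) \<union> I" "A - I \<subseteq> - I" "card (A - I) = b - card I"
      by (auto simp: card_Diff_subset)
    then show "A \<in> (\<lambda>B. B \<union> I) ` {B. B \<subseteq> - I \<and> card B = b - card I}" by blast
  next
    fix A assume "A \<in> (\<lambda>B. B \<union> I) ` {B. B \<subseteq> - I \<and> card B = b - card I}"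
    then obtain B where B: "B \<subseteq> - I" "card B = b - card I" "A = B \<union> I" by auto
    then have "card A = card B + card I" by (simp add: card_Un_disjoint disjoint_eq_subset_Compl)
    with B assms show "A \<in> {A::'n set. card A = b \<and> I \<subseteq> A}" by auto
  qed
  have "card (- I) = CARD('n) - card I"
    by (simp add: Compl_eq_Diff_UNIV card_Diff_subset)
  then show ?thesis
    unfolding eq card_image[OF inj] by (simp add: n_subsets)
qed

lemma card_subsets_of_card: "card {A::'n::finite set. card A = b} = CARD('n) choose b"
  using card_supersets_of_card[of "{}" b] by simp

lemma card_subsets_of_card_containing:
  fixes i :: "'n::finite"
  assumes "1 \<le> b"
  shows "real (card {A::'n set. card A = b \<and> i \<in> A})
       = real b / real CARD('n) * real (card {A::'n set. card A = b})"
proof -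
  have "card {A::'n set. card A = b \<and> i \<in> A} = (CARD('n) - 1) choose (b - 1)"
    using card_supersets_of_card[of "{i}" b] assms by simp
  moreover have "b * (CARD('n) choose b) = CARD('n) * ((CARD('n) - 1) choose (b - 1))"
    using times_binomial_minus1_eq[of b "CARD('n)"] assms by simp
  ultimately have "real b * real (CARD('n) choose b)
      = real CARD('n) * real (card {A::'n set. card A = b \<and> i \<in> A})"
    by (metis of_nat_mult)
  then show ?thesis
    unfolding card_subsets_of_card by (simp add: field_simps)
qed

lemma card_subsets_of_card_containing_pair:
  fixes i j :: "'n::finite"
  assumes "1 \<le> b" "i \<noteq> j"
  shows "real (card {A::'n set. card A = b \<and> i \<in> A \<and> j \<in> A})
     = real b * (real b - 1) / (real CARD('n) * (real CARD('n) - 1))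
       * real (card {A::'n set. card A = b})"
proof (cases "b = 1")
  case True
  have "{A::'n set. card A = b \<and> i \<in> A \<and> j \<in> A} = {}"
    using True assms(2) by (auto simp: card_Suc_eq)
  then show ?thesis using True by simp
next
  case False
  let ?n = "CARD('n)"
  have two: "2 \<le> ?n"
    using assms(2) card_mono[of UNIV "{i, j}"] by simp
  have "{A::'n set. card A = b \<and> i \<in> A \<and> j \<in> A} = {A. card A = b \<and> {i, j} \<subseteq> A}" by auto
  then have pairs: "card {A::'n set. card A = b \<and> i \<in> A \<and> j \<in> A} = (?n - 2) choose (b - 2)"
    using card_supersets_of_card[of "{i, j}" b] assms False by (simp add: numeral_2_eq_2)
  have "b * (b - 1) * (?n choose b) = (b - 1) * (b * (?n choose b))"
    by simp
  also have "\<dots> = ?n * ((b - 1) * ((?n - 1) choose (b - 1)))"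
    using times_binomial_minus1_eq[of b ?n] assms by simp
  also have "\<dots> = ?n * (?n - 1) * ((?n - 2) choose (b - 2))"
    using times_binomial_minus1_eq[of "b - 1" "?n - 1"] assms False
    by (simp add: diff_diff_add numeral_2_eq_2)
  finally have "real (b * (b - 1) * (?n choose b))
      = real (?n * (?n - 1) * card {A::'n set. card A = b \<and> i \<in> A \<and> j \<in> A})"
    unfolding pairs by (simp only:)
  then have "real b * (real b - 1) * real (?n choose b)
      = real ?n * (real ?n - 1) * real (card {A::'n set. card A = b \<and> i \<in> A \<and> j \<in> A})"
    using assms two by (simp only: of_nat_mult of_nat_diff of_nat_1)
  then show ?thesis
    unfolding card_subsets_of_card using two by (simp add: field_simps)
qed

lemma expectation_batch_sum:
  fixes g :: "'n::finite \<Rightarrow> real"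
  assumes "1 \<le> b" "b \<le> CARD('n)"
  shows "measure_pmf.expectation (batch_pmf b) (\<lambda>A. \<Sum>i\<in>A. g i)
       = real b / real CARD('n) * (\<Sum>i\<in>UNIV. g i)"
proof -
  let ?S = "{A::'n set. card A = b}"
  have card_pos: "card ?S > 0"
    unfolding card_subsets_of_card using assms(2) by simp
  have "{A \<in> ?S. i \<in> A} = {A. card A = b \<and> i \<in> A}" for i by auto
  then have "(\<Sum>A\<in>?S. \<Sum>i\<in>A. g i) = (\<Sum>i\<in>UNIV. real (card {A. card A = b \<and> i \<in> A}) * g i)"
    using sum.swap_restrict[of ?S UNIV "\<lambda>A i. g i" "\<lambda>A i. i \<in> A"] by simp
  also have "\<dots> = real (card ?S) * (real b / real CARD('n) * (\<Sum>i\<in>UNIV. g i))"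
    by (simp add: card_subsets_of_card_containing[OF assms(1)] sum_distrib_left sum_distrib_right sum_divide_distrib mult_ac)
  finally show ?thesis
    using card_pos unfolding batch_pmf_def by (simp add: integral_pmf_of_set card_gt_0_iff)
qed

lemma expectation_batch_double_sum:
  fixes f :: "'n::finite \<Rightarrow> 'n \<Rightarrow> real"
  assumes "1 \<le> b" "b \<le> CARD('n)"
  defines "p \<equiv> real b * (real b - 1) / (real CARD('n) * (real CARD('n) - 1))"
  shows "measure_pmf.expectation (batch_pmf b) (\<lambda>A. \<Sum>i\<in>A. \<Sum>j\<in>A. f i j)
     = (real b / real CARD('n) - p) * (\<Sum>i\<in>UNIV. f i i) + p * (\<Sum>i\<in>UNIV. \<Sum>j\<in>UNIV. f i j)"
proof -
  let ?S = "{A::'n set. card A = b}"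
  let ?C = "real (card ?S)"
  have card_pos: "card ?S > 0"
    unfolding card_subsets_of_card using assms(2) by simp
  have inner: "(\<Sum>A\<in>{A \<in> ?S. i \<in> A}. \<Sum>j\<in>A. f i j)
      = (\<Sum>j\<in>UNIV. real (card {A. card A = b \<and> i \<in> A \<and> j \<in> A}) * f i j)" for i :: 'n
  proof -
    have "{A \<in> {A \<in> ?S. i \<in> A}. j \<in> A} = {A. card A = b \<and> i \<in> A \<and> j \<in> A}" for j :: 'n
      by auto
    then show ?thesis
      using sum.swap_restrict[of "{A \<in> ?S. i \<in> A}" UNIV "\<lambda>A j. f i j" "\<lambda>A j. j \<in> A"] by simp
  qed
  have pair_count: "real (card {A. card A = b \<and> i \<in> A \<and> j \<in> A})
      = ?C * (p + (if j = i then real b / real CARD('n) - p else 0))" for i j :: 'n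
    using card_subsets_of_card_containing[OF assms(1), of i]
      card_subsets_of_card_containing_pair[OF assms(1), of i j]
    unfolding p_def by (cases "j = i") (simp_all add: mult_ac)
  have "(\<Sum>A\<in>?S. \<Sum>i\<in>A. \<Sum>j\<in>A. f i j) = (\<Sum>i\<in>UNIV. \<Sum>A\<in>{A \<in> ?S. i \<in> A}. \<Sum>j\<in>A. f i j)"
    using sum.swap_restrict[of ?S UNIV "\<lambda>A i. \<Sum>j\<in>A. f i j" "\<lambda>A i. i \<in> A"] by simp
  also have "\<dots> = (\<Sum>i\<in>UNIV. \<Sum>j\<in>UNIV. ?C * (p + (if j = i then real b / real CARD('n) - p else 0)) * f i j)"
    unfolding inner pair_count ..
  also have "\<dots> = ?C * ((real b / real CARD('n) - p) * (\<Sum>i\<in>UNIV. f i i) + p * (\<Sum>i\<in>UNIV. \<Sum>j\<in>UNIV. f i j))"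
    by (simp add: algebra_simps sum.distrib sum_distrib_left sum_distrib_right if_distrib[of "\<lambda>x. _ * x"]
        sum.delta sum_subtractf sum_divide_distrib cong: if_cong)
  finally show ?thesis
    using card_pos unfolding batch_pmf_def by (simp add: integral_pmf_of_set card_gt_0_iff)
qed

text \<open>The expected separable overapproximation for uniform batches; the bracketed factor is the
  \<open>\<beta>\<^sub>b\<close> of the statement when \<open>s = \<sigma>\<^sup>2\<close>.\<close>

lemma expectation_norm_batch_sum_le:
  fixes z :: "'n::finite \<Rightarrow> 'a::real_inner" and c :: "'n \<Rightarrow> real"
  assumes "1 \<le> b" "b \<le> CARD('n)"
    and norm_le: "\<And>i. (norm (z i))\<^sup>2 \<le> c i"
    and norm_sum_le: "(norm (\<Sum>i\<in>UNIV. z i))\<^sup>2 \<le> real CARD('n) * s * (\<Sum>i\<in>UNIV. c i)"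
  shows "measure_pmf.expectation (batch_pmf b) (\<lambda>A. (norm (\<Sum>i\<in>A. z i))\<^sup>2)
     \<le> real b / real CARD('n) * (1 + (real b - 1) * (real CARD('n) * s - 1) / (real CARD('n) - 1))
         * (\<Sum>i\<in>UNIV. c i)"
proof -
  let ?n = "real CARD('n)"
  define R where "R = (real b - 1) / (?n - 1)"
  define p where "p = real b / ?n * R"
  have R: "0 \<le> R" "R \<le> 1"
    unfolding R_def using assms(1,2) by (auto simp: divide_le_eq_1)
  have p: "0 \<le> p" "p \<le> real b / ?n"
    unfolding p_def using R mult_left_le[of R "real b / ?n"] by simp_all
  have norm_sum_sq: "(norm (\<Sum>i\<in>A. z i))\<^sup>2 = (\<Sum>i\<in>A. \<Sum>j\<in>A. z i \<bullet> z j)" for A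
    unfolding power2_norm_eq_inner by (simp only: inner_sum_left inner_sum_right) (rule sum.swap)
  have "measure_pmf.expectation (batch_pmf b) (\<lambda>A. (norm (\<Sum>i\<in>A. z i))\<^sup>2)
      = (real b / ?n - p) * (\<Sum>i\<in>UNIV. (norm (z i))\<^sup>2) + p * (norm (\<Sum>i\<in>UNIV. z i))\<^sup>2"
    unfolding norm_sum_sq expectation_batch_double_sum[OF assms(1,2)]
    by (simp add: p_def R_def power2_norm_eq_inner)
  also have "\<dots> \<le> (real b / ?n - p) * (\<Sum>i\<in>UNIV. c i) + p * (?n * s * (\<Sum>i\<in>UNIV. c i))"
    using p norm_le norm_sum_le by (intro add_mono mult_left_mono sum_mono) simp_all
  also have "\<dots> = real b / ?n * (1 + R * (?n * s - 1)) * (\<Sum>i\<in>UNIV. c i)"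
    unfolding p_def by (simp add: algebra_simps)
  finally show ?thesis
    by (simp add: R_def)
qed

section \<open>Iterating a random map\<close>

primrec random_iteration_pmf :: "('a \<Rightarrow> 'b \<Rightarrow> 'a) \<Rightarrow> 'b pmf \<Rightarrow> 'a \<Rightarrow> nat \<Rightarrow> 'a pmf" where
  "random_iteration_pmf F p a\<^sub>0 0 = return_pmf a\<^sub>0"
| "random_iteration_pmf F p a\<^sub>0 (Suc t) = bind_pmf (random_iteration_pmf F p a\<^sub>0 t) (\<lambda>a. map_pmf (F a) p)"

lemma finite_set_random_iteration_pmf:
  "finite (set_pmf p) \<Longrightarrow> finite (set_pmf (random_iteration_pmf F p a\<^sub>0 t))"
  by (induction t) auto

lemma set_random_iteration_pmf_invariant:
  assumes "P a\<^sub>0" "\<And>a B. P a \<Longrightarrow> P (F a B)"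
  shows "a \<in> set_pmf (random_iteration_pmf F p a\<^sub>0 t) \<Longrightarrow> P a"
  using assms by (induction t arbitrary: a) auto

lemma expectation_random_iteration_pmf_Suc:
  fixes f :: "'a \<Rightarrow> real"
  assumes "finite (set_pmf p)"
  shows "measure_pmf.expectation (random_iteration_pmf F p a\<^sub>0 (Suc t)) f
     = measure_pmf.expectation (random_iteration_pmf F p a\<^sub>0 t)
         (\<lambda>a. measure_pmf.expectation p (\<lambda>B. f (F a B)))"
proof -
  let ?q = "random_iteration_pmf F p a\<^sub>0 t"
  have fin: "finite (set_pmf ?q)"
    using assms by (rule finite_set_random_iteration_pmf)
  have "measure_pmf.expectation (random_iteration_pmf F p a\<^sub>0 (Suc t)) f
      = (\<Sum>a\<in>set_pmf ?q. pmf ?q a *\<^sub>R measure_pmf.expectation (map_pmf (F a) p) f)"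
    using assms fin by (simp add: pmf_expectation_bind[of "set_pmf ?q"])
  also have "\<dots> = measure_pmf.expectation ?q (\<lambda>a. measure_pmf.expectation p (\<lambda>B. f (F a B)))"
    by (simp add: integral_measure_pmf[OF fin])
  finally show ?thesis .
qed

lemma iteration_eq_if_inputs_agree:
  assumes "\<And>As t. it As (Suc t) = F (it As t) (As t)"
    and "\<And>s. s < t \<Longrightarrow> As s = Bs s"
    and "\<And>As Bs. it As 0 = it Bs 0"
  shows "it As t = it Bs t"
  using assms(2) by (induction t) (simp_all add: assms(1,3))

lemma map_pmf_iteration_Pi_pmf:
  assumes zero: "\<And>As. it As 0 = a\<^sub>0"
    and step: "\<And>As t. it As (Suc t) = F (it As t) (As t)"
    and "t \<le> T"
  shows "map_pmf (\<lambda>As. it As t) (Pi_pmf {..<T} dflt (\<lambda>_. p)) = random_iteration_pmf F p a\<^sub>0 t"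
proof -
  have agree: "it As t = it Bs t" if "\<And>s. s < t \<Longrightarrow> As s = Bs s" for As Bs t
    using iteration_eq_if_inputs_agree[of it F, OF step that] zero by simp
  have prefix: "map_pmf (\<lambda>As. it As t) (Pi_pmf {..<t} dflt (\<lambda>_. p)) = random_iteration_pmf F p a\<^sub>0 t" for t
  proof (induction t)
    case 0
    show ?case by (simp add: zero)
  next
    case (Suc t)
    let ?Pi = "Pi_pmf {..<t} dflt (\<lambda>_. p)"
    have "Pi_pmf {..<Suc t} dflt (\<lambda>_. p) = bind_pmf p (\<lambda>B. map_pmf (\<lambda>As. As(t := B)) ?Pi)"
      unfolding lessThan_Suc by (subst Pi_pmf_insert') (auto simp: map_pmf_def)
    moreover have "it (As(t := B)) (Suc t) = F (it As t) B" for As B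
      unfolding step by (subst agree[of t "As(t := B)" As]) auto
    ultimately have "map_pmf (\<lambda>As. it As (Suc t)) (Pi_pmf {..<Suc t} dflt (\<lambda>_. p))
        = bind_pmf p (\<lambda>B. map_pmf (\<lambda>a. F a B) (random_iteration_pmf F p a\<^sub>0 t))"
      by (simp add: map_bind_pmf map_pmf_comp Suc.IH[symmetric])
    then show ?case
      by (simp add: map_pmf_def bind_commute_pmf[of p])
  qed
  have "Pi_pmf {..<t} dflt (\<lambda>_. p) = map_pmf (\<lambda>As s. if s \<in> {..<t} then As s else dflt) (Pi_pmf {..<T} dflt (\<lambda>_. p))"
    using assms(3) by (intro Pi_pmf_subset) auto
  then have "random_iteration_pmf F p a\<^sub>0 t
      = map_pmf (\<lambda>As. it (\<lambda>s. if s \<in> {..<t} then As s else dflt) t) (Pi_pmf {..<T} dflt (\<lambda>_. p))"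
    by (simp add: prefix[symmetric] map_pmf_comp)
  also have "\<dots> = map_pmf (\<lambda>As. it As t) (Pi_pmf {..<T} dflt (\<lambda>_. p))"
    by (intro map_pmf_cong refl agree) auto
  finally show ?thesis ..
qed

lemma expectation_mono_finite_pmf:
  fixes f g :: "'a \<Rightarrow> real"
  assumes "finite (set_pmf p)" "\<And>a. a \<in> set_pmf p \<Longrightarrow> f a \<le> g a"
  shows "measure_pmf.expectation p f \<le> measure_pmf.expectation p g"
  using assms by (intro integral_mono_AE) (auto intro: integrable_measure_pmf_finite simp: AE_measure_pmf_iff)

lemma finite_set_schedule_pmf: "finite (set_pmf (schedule_pmf b T :: (nat \<Rightarrow> 'n::finite set) pmf))"
  unfolding schedule_pmf_def by (rule finite_subset[OF set_Pi_pmf_subset']) (auto intro!: finite_PiE_dflt)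

section \<open>An abstract convergence recursion\<close>

lemma harmonic_decay_step:
  fixes e r K d :: real
  assumes "0 < r" "r \<le> 1" "0 < K" "2 \<le> d" "e \<le> 4 * K / d"
  shows "(1 - r * (2 / d)) * e + r * (2 / d)\<^sup>2 * K \<le> 4 * K / (d + r)"
proof -
  have "r * (2 / d) \<le> 1 * 1"
    using assms by (intro mult_mono) auto
  then have "(1 - r * (2 / d)) * e \<le> (1 - r * (2 / d)) * (4 * K / d)"
    using assms(5) by (intro mult_left_mono) auto
  also have "\<dots> + r * (2 / d)\<^sup>2 * K = 4 * K * (d - r) / d\<^sup>2"
    using assms(4) by (simp add: field_simps power2_eq_square)
  also have "\<dots> \<le> 4 * K / (d + r)"
  proof -
    have "(d - r) * (d + r) \<le> d\<^sup>2"
      by (simp add: power2_eq_square algebra_simps)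
    then have "(d - r) / d\<^sup>2 \<le> 1 / (d + r)"
      using assms by (simp add: field_simps)
    from mult_left_mono[OF this, of "4 * K"] show ?thesis
      using assms(3) by simp
  qed
  finally show ?thesis
    by simp
qed

text \<open>For mini-batch SDCA, \<open>e t\<close> is the expected dual suboptimality and \<open>g t\<close> the expected
  duality gap after \<open>t\<close> steps.\<close>

locale gap_recursion =
  fixes e g :: "nat \<Rightarrow> real" and r K :: real
  assumes r_pos: "0 < r" and r_le_1: "r \<le> 1" and K_pos: "0 < K"
    and progress: "\<And>t s. 0 \<le> s \<Longrightarrow> s \<le> 1 \<Longrightarrow> e (Suc t) \<le> e t - r * (s * g t - s\<^sup>2 * K)"
    and e_le_g: "\<And>t. e t \<le> g t"
    and e_nonneg: "\<And>t. 0 \<le> e t"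
begin

lemma contraction:
  assumes "0 \<le> s" "s \<le> 1"
  shows "e (Suc t) \<le> (1 - r * s) * e t + r * s\<^sup>2 * K"
proof -
  have "r * s * e t \<le> r * s * g t"
    using e_le_g r_pos assms by (intro mult_left_mono) auto
  then show ?thesis
    using progress[OF assms, of t] by (simp add: algebra_simps)
qed

lemma e_le_geometric:
  assumes "e 0 \<le> 1"
  shows "e t \<le> (1 - r) ^ t + K"
proof (induction t)
  case 0
  show ?case using assms K_pos by simp
next
  case (Suc t)
  have "e (Suc t) \<le> (1 - r) * e t + r * K"
    using contraction[of 1 t] by simp
  also have "\<dots> \<le> (1 - r) * ((1 - r) ^ t + K) + r * K"
    using Suc r_pos r_le_1 by (intro add_mono mult_left_mono) auto
  also have "\<dots> = (1 - r) ^ Suc t + K"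
    by (simp add: algebra_simps)
  finally show ?case .
qed

lemma e_le_harmonic:
  assumes "e t\<^sub>0 \<le> 2 * K"
  shows "e (t\<^sub>0 + k) \<le> 4 * K / (2 + r * k)"
proof (induction k)
  case 0
  show ?case using assms by simp
next
  case (Suc k)
  let ?d = "2 + r * k"
  have d: "2 \<le> ?d"
    using r_pos by simp
  then have "e (t\<^sub>0 + Suc k) \<le> (1 - r * (2 / ?d)) * e (t\<^sub>0 + k) + r * (2 / ?d)\<^sup>2 * K"
    using contraction[of "2 / ?d" "t\<^sub>0 + k"] by simp
  also have "\<dots> \<le> 4 * K / (?d + r)"
    using harmonic_decay_step[OF r_pos r_le_1 K_pos d Suc] .
  finally show ?case
    by (simp add: algebra_simps)
qed

lemma average_g_le:
  assumes "1 \<le> r * real (T - T\<^sub>0)"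
  shows "(1 / real (T - T\<^sub>0)) * (\<Sum>t\<in>{T\<^sub>0..<T}. g t) \<le> e T\<^sub>0 + K / (r * real (T - T\<^sub>0))"
proof -
  define L where "L = real (T - T\<^sub>0)"
  have L: "0 < L" "T\<^sub>0 \<le> T"
    using assms r_pos unfolding L_def by (auto intro: ccontr)
  define s where "s = 1 / (r * L)"
  have s: "0 \<le> s" "s \<le> 1"
    using assms r_pos L unfolding s_def L_def by auto
  \<comment> \<open>With this constant step-size the quadratic terms sum to \<open>K / (r L)\<close> and the rest telescopes.\<close>
  have "g t / L \<le> e t - e (Suc t) + K / (r * L) / L" for t
  proof -
    have "r * (s * g t) = g t / L" "r * (s\<^sup>2 * K) = K / (r * L) / L"
      unfolding s_def using r_pos L by (simp_all add: power2_eq_square)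
    moreover have "e (Suc t) \<le> e t - (r * (s * g t) - r * (s\<^sup>2 * K))"
      using progress[OF s, of t] by (simp add: right_diff_distrib)
    ultimately show ?thesis
      by simp
  qed
  then have "(\<Sum>t\<in>{T\<^sub>0..<T}. g t / L) \<le> (\<Sum>t\<in>{T\<^sub>0..<T}. (e t - e (Suc t)) + K / (r * L) / L)"
    by (intro sum_mono) simp
  also have "\<dots> = e T\<^sub>0 - e T + K / (r * L)"
    using L sum_Suc_diff'[of T\<^sub>0 T e] by (simp add: sum.distrib sum_subtractf L_def)
  also have "\<dots> \<le> e T\<^sub>0 + K / (r * L)"
    using e_nonneg[of T] by simp
  finally show ?thesis
    by (simp add: sum_divide_distrib L_def)
qed

lemma average_g_le_eps:
  assumes e0: "e 0 \<le> 1" and eps: "0 < eps"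
    and t0: "ln (1 / K) \<le> r * t\<^sub>0" and T0: "t\<^sub>0 \<le> T\<^sub>0" "8 * K / eps - 2 \<le> r * real (T\<^sub>0 - t\<^sub>0)"
    and T: "1 \<le> r * real (T - T\<^sub>0)" "2 * K / eps \<le> r * real (T - T\<^sub>0)"
  shows "(1 / real (T - T\<^sub>0)) * (\<Sum>t\<in>{T\<^sub>0..<T}. g t) \<le> eps"
proof -
  have "(1 - r) ^ t\<^sub>0 \<le> exp (- r) ^ t\<^sub>0"
    using r_pos r_le_1 exp_ge_add_one_self[of "- r"] by (intro power_mono) auto
  also have "\<dots> = exp (- (r * t\<^sub>0))"
    by (simp add: exp_of_nat_mult[symmetric] mult.commute)
  also have "\<dots> \<le> exp (ln K)"
    by (simp only: exp_le_cancel_iff) (use t0 K_pos in \<open>simp add: ln_div\<close>)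
  finally have "e t\<^sub>0 \<le> 2 * K"
    using e_le_geometric[OF e0, of t\<^sub>0] K_pos by simp
  then have "e T\<^sub>0 \<le> 4 * K / (2 + r * real (T\<^sub>0 - t\<^sub>0))"
    using e_le_harmonic[of t\<^sub>0 "T\<^sub>0 - t\<^sub>0"] T0(1) by simp
  also have "\<dots> \<le> 4 * K / (8 * K / eps)"
    using T0(2) K_pos eps r_pos by (intro divide_left_mono mult_pos_pos add_pos_nonneg divide_pos_pos) auto
  finally have e_T0: "e T\<^sub>0 \<le> eps / 2"
    using K_pos by simp
  have tail: "K / (r * real (T - T\<^sub>0)) \<le> eps / 2"
  proof -
    define L where "L = r * real (T - T\<^sub>0)"
    have "0 < L"
      unfolding L_def using zero_less_one T(1) by (rule less_le_trans)
    then show ?thesis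
      using T(2) eps unfolding L_def[symmetric] by (simp add: field_simps)
  qed
  have "(1 / real (T - T\<^sub>0)) * (\<Sum>t\<in>{T\<^sub>0..<T}. g t) \<le> e T\<^sub>0 + K / (r * real (T - T\<^sub>0))"
    using T(1) by (rule average_g_le)
  also have "\<dots> \<le> eps / 2 + eps / 2"
    using e_T0 tail by (rule add_mono)
  finally show ?thesis
    by simp
qed

end

lemma schedule_t0_T0_conditions:
  fixes n b lam beta eps :: real and t\<^sub>0 T\<^sub>0 :: nat
  assumes pos: "0 < b" "0 < n" "0 < lam" "0 < beta" "0 < eps"
    and t0: "int t\<^sub>0 \<ge> max 0 (ceiling (n / b * ln (2 * lam * n / beta)))"
    and T0: "real T\<^sub>0 \<ge> real t\<^sub>0 + beta / b * max 0 (4 / (lam * eps) - 2 * n / beta)"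
  defines "r \<equiv> b / n" and "K \<equiv> beta / (2 * lam * n)"
  shows "ln (1 / K) \<le> r * t\<^sub>0" and "t\<^sub>0 \<le> T\<^sub>0" and "8 * K / eps - 2 \<le> r * real (T\<^sub>0 - t\<^sub>0)"
proof -
  have r: "0 < r"
    unfolding r_def using pos by simp
  have "n / b * ln (2 * lam * n / beta) \<le> real t\<^sub>0"
    using t0 by (simp add: ceiling_le_iff)
  from mult_left_mono[OF this, of r] r
  show "ln (1 / K) \<le> r * t\<^sub>0"
    unfolding r_def K_def using pos by simp
  have "0 \<le> beta / b * max 0 (4 / (lam * eps) - 2 * n / beta)"
    using pos by simp
  then show t0_T0: "t\<^sub>0 \<le> T\<^sub>0"
    using T0 by linarith
  have "beta / b * (4 / (lam * eps) - 2 * n / beta) \<le> beta / b * max 0 (4 / (lam * eps) - 2 * n / beta)"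
    using pos by (intro mult_left_mono) auto
  then have "beta / b * (4 / (lam * eps) - 2 * n / beta) \<le> real (T\<^sub>0 - t\<^sub>0)"
    using T0 t0_T0 by (simp add: of_nat_diff)
  from mult_left_mono[OF this, of r] r
  have "r * (beta / b * (4 / (lam * eps) - 2 * n / beta)) \<le> r * real (T\<^sub>0 - t\<^sub>0)"
    by simp
  moreover have "r * (beta / b * (4 / (lam * eps) - 2 * n / beta)) = 8 * K / eps - 2"
    unfolding r_def K_def using pos by (simp add: field_simps)
  ultimately show "8 * K / eps - 2 \<le> r * real (T\<^sub>0 - t\<^sub>0)"
    by simp
qed

lemma schedule_T_conditions:
  fixes n b lam beta eps :: real and T\<^sub>0 T :: nat
  assumes pos: "0 < b" "0 < n" "0 < lam" "0 < beta" "0 < eps"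
    and T: "real T \<ge> real T\<^sub>0 + max (real_of_int (ceiling (n / b))) (beta / b * (1 / (lam * eps)))"
  defines "r \<equiv> b / n" and "K \<equiv> beta / (2 * lam * n)"
  shows "1 \<le> r * real (T - T\<^sub>0)" and "2 * K / eps \<le> r * real (T - T\<^sub>0)"
proof -
  have r: "0 < r"
    unfolding r_def using pos by simp
  have T_T0: "n / b \<le> real T - real T\<^sub>0" "beta / b * (1 / (lam * eps)) \<le> real T - real T\<^sub>0"
    using T le_of_int_ceiling[of "n / b"] max.cobounded1 max.cobounded2 by linarith+
  moreover have "0 < n / b"
    using pos by simp
  ultimately have "real (T - T\<^sub>0) = real T - real T\<^sub>0"
    by (simp add: of_nat_diff)
  moreover from mult_left_mono[OF T_T0(1), of r] r
  have "1 \<le> r * (real T - real T\<^sub>0)"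
    unfolding r_def using pos by simp
  moreover from mult_left_mono[OF T_T0(2), of r] r
  have "2 * K / eps \<le> r * (real T - real T\<^sub>0)"
    unfolding r_def K_def using pos by (simp add: field_simps)
  ultimately show "1 \<le> r * real (T - T\<^sub>0)" "2 * K / eps \<le> r * real (T - T\<^sub>0)"
    by simp_all
qed

section \<open>Duality for the hinge-loss SVM\<close>

definition dual_feasible :: "('n::finite \<Rightarrow> real) \<Rightarrow> bool" where
  "dual_feasible a \<longleftrightarrow> (\<forall>i. 0 \<le> a i \<and> a i \<le> 1)"

lemma dual_feasible_average:
  fixes a :: "'t \<Rightarrow> 'n::finite \<Rightarrow> real"
  assumes "finite S" "S \<noteq> {}" "\<And>t. t \<in> S \<Longrightarrow> dual_feasible (a t)"
  shows "dual_feasible (\<lambda>i. (1 / real (card S)) * (\<Sum>t\<in>S. a t i))"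
  unfolding dual_feasible_def
proof
  fix i
  have "0 \<le> (\<Sum>t\<in>S. a t i)"
    using assms(3) unfolding dual_feasible_def by (auto intro!: sum_nonneg)
  moreover have "(\<Sum>t\<in>S. a t i) \<le> (\<Sum>t\<in>S. 1)"
    by (rule sum_mono) (use assms(3) in \<open>auto simp: dual_feasible_def\<close>)
  ultimately
  show "0 \<le> (1 / real (card S)) * (\<Sum>t\<in>S. a t i) \<and> (1 / real (card S)) * (\<Sum>t\<in>S. a t i) \<le> 1"
    using assms(1,2) by (simp add: card_gt_0_iff)
qed

lemma max_0_mean_le:
  fixes z :: "'t \<Rightarrow> real"
  assumes "finite S" "S \<noteq> {}"
  shows "max 0 ((1 / real (card S)) * (\<Sum>t\<in>S. z t)) \<le> (1 / real (card S)) * (\<Sum>t\<in>S. max 0 (z t))"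
proof -
  have "(\<Sum>t\<in>S. z t) \<le> (\<Sum>t\<in>S. max 0 (z t))" "0 \<le> (\<Sum>t\<in>S. max 0 (z t))"
    by (auto intro: sum_mono sum_nonneg)
  then show ?thesis
    by (auto intro: divide_right_mono)
qed

lemma norm_mean_squared_le:
  fixes v :: "'t \<Rightarrow> 'a::real_normed_vector"
  assumes "finite S" "S \<noteq> {}"
  shows "(norm ((1 / real (card S)) *\<^sub>R (\<Sum>t\<in>S. v t)))\<^sup>2 \<le> (1 / real (card S)) * (\<Sum>t\<in>S. (norm (v t))\<^sup>2)"
proof -
  let ?c = "1 / real (card S)"
  have c: "0 < ?c"
    using assms by (simp add: card_gt_0_iff)
  have "norm (?c *\<^sub>R (\<Sum>t\<in>S. v t)) \<le> (\<Sum>t\<in>S. ?c * norm (v t))"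
    using norm_sum[of v S] c by (simp add: sum_divide_distrib[symmetric] divide_right_mono)
  then have "(norm (?c *\<^sub>R (\<Sum>t\<in>S. v t)))\<^sup>2 \<le> (\<Sum>t\<in>S. ?c * norm (v t))\<^sup>2"
    by (rule power_mono) simp
  also have "\<dots> \<le> (\<Sum>t\<in>S. ?c * (norm (v t))\<^sup>2)"
    using convex_on_sum[OF assms convex_power2, of "\<lambda>_. ?c" "\<lambda>t. norm (v t)"] c by simp
  finally show ?thesis
    by (simp add: sum_distrib_left)
qed

locale svm_dual =
  fixes x :: "'n::finite \<Rightarrow> 'd::euclidean_space" and y :: "'n \<Rightarrow> real" and lam :: real
  assumes lam_pos: "0 < lam" and labels: "\<forall>i. y i \<in> {-1, 1}"
begin

abbreviation "w \<equiv> wmap x y lam"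
abbreviation "P \<equiv> primal x y lam"
abbreviation "D \<equiv> dual x y lam"

lemma label_squared: "y i * y i = 1"
  using labels[rule_format, of i] by auto

lemma inner_wmap: "v \<bullet> w a = (1 / (lam * real CARD('n))) * (\<Sum>i\<in>UNIV. a i * y i * (v \<bullet> x i))"
  by (simp add: wmap_def inner_sum_right mult.assoc)

lemma sum_weighted_margins: "(\<Sum>i\<in>UNIV. a i * (y i * (v \<bullet> x i))) = lam * real CARD('n) * (v \<bullet> w a)"
  using lam_pos by (simp add: inner_wmap mult.assoc)

lemma wmap_add: "w (\<lambda>i. a i + d i) = w a + w d"
  by (simp add: wmap_def distrib_right scaleR_add_left sum.distrib scaleR_add_right)

lemma dual_eq_norm_wmap: "D a = - lam / 2 * (norm (w a))\<^sup>2 + (1 / real CARD('n)) * (\<Sum>i\<in>UNIV. a i)"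
proof -
  have "(norm (w a))\<^sup>2
      = (1 / (lam * real CARD('n)))\<^sup>2 * (\<Sum>i\<in>UNIV. \<Sum>j\<in>UNIV. a i * (y i * y j * (x i \<bullet> x j)) * a j)"
    unfolding power2_norm_eq_inner
    by (simp add: wmap_def inner_sum_left inner_sum_right sum_distrib_left power2_eq_square
        algebra_simps inner_commute)
  then show ?thesis
    using lam_pos by (simp add: dual_def power2_eq_square field_simps)
qed

lemma weak_duality:
  assumes "dual_feasible a"
  shows "D a \<le> P v"
proof -
  let ?n = "real CARD('n)"
  have "(\<Sum>i\<in>UNIV. a i) - lam * ?n * (v \<bullet> w a) = (\<Sum>i\<in>UNIV. a i * (1 - y i * (v \<bullet> x i)))"
    by (simp add: right_diff_distrib sum_subtractf sum_weighted_margins)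
  also have "\<dots> \<le> (\<Sum>i\<in>UNIV. max 0 (1 - y i * (v \<bullet> x i)))"
  proof (rule sum_mono)
    fix i
    have "0 \<le> a i" "a i \<le> 1"
      using assms by (auto simp: dual_feasible_def)
    then show "a i * (1 - y i * (v \<bullet> x i)) \<le> max 0 (1 - y i * (v \<bullet> x i))"
      by (cases "0 \<le> 1 - y i * (v \<bullet> x i)")
        (auto intro: mult_left_le_one_le mult_nonneg_nonpos simp: max_def)
  qed
  finally have hinge: "(1 / ?n) * (\<Sum>i\<in>UNIV. a i)
      \<le> (1 / ?n) * (\<Sum>i\<in>UNIV. max 0 (1 - y i * (v \<bullet> x i))) + lam * (v \<bullet> w a)"
    by (simp add: field_simps)
  have "0 \<le> (v - w a) \<bullet> (v - w a)"
    by simp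
  then have "2 * (v \<bullet> w a) \<le> (norm v)\<^sup>2 + (norm (w a))\<^sup>2"
    by (simp add: power2_norm_eq_inner inner_diff_left inner_diff_right inner_commute)
  from mult_left_mono[OF this less_imp_le[OF lam_pos]]
  have "lam * (v \<bullet> w a) \<le> lam / 2 * ((norm v)\<^sup>2 + (norm (w a))\<^sup>2)"
    by (simp add: field_simps)
  with hinge show ?thesis
    unfolding dual_eq_norm_wmap primal_def by (simp add: algebra_simps)
qed

text \<open>\<open>hinge_active a\<close> is the dual point matched to \<open>w a\<close>: its entries are negated
  subgradients of the hinge losses at the margins of \<open>w a\<close>.\<close>

definition hinge_active :: "('n \<Rightarrow> real) \<Rightarrow> 'n \<Rightarrow> real" where
  "hinge_active a i = (if y i * (w a \<bullet> x i) < 1 then 1 else 0)"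

lemma duality_gap_eq:
  "P (w a) - D a = (1 / real CARD('n)) * (\<Sum>i\<in>UNIV. max 0 (1 - y i * (w a \<bullet> x i)))
     + lam * (norm (w a))\<^sup>2 - (1 / real CARD('n)) * (\<Sum>i\<in>UNIV. a i)"
  unfolding primal_def dual_eq_norm_wmap by simp

lemma duality_gap_eq_hinge_active:
  "P (w a) - D a = (1 / real CARD('n)) * (\<Sum>i\<in>UNIV. (hinge_active a i - a i) * (1 - y i * (w a \<bullet> x i)))"
proof -
  have "(hinge_active a i - a i) * (1 - y i * (w a \<bullet> x i))
      = max 0 (1 - y i * (w a \<bullet> x i)) - a i + a i * (y i * (w a \<bullet> x i))" for i
    by (simp add: hinge_active_def max_def algebra_simps)
  then have sum_eq: "(\<Sum>i\<in>UNIV. (hinge_active a i - a i) * (1 - y i * (w a \<bullet> x i)))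
      = (\<Sum>i\<in>UNIV. max 0 (1 - y i * (w a \<bullet> x i))) - (\<Sum>i\<in>UNIV. a i)
        + lam * real CARD('n) * (w a \<bullet> w a)"
    using sum_weighted_margins[of a "w a"] by (simp add: sum.distrib sum_subtractf)
  show ?thesis
    unfolding sum_eq duality_gap_eq power2_norm_eq_inner using lam_pos by (simp add: field_simps)
qed

lemma sum_squared_hinge_active_diff_le:
  assumes "dual_feasible a"
  shows "(\<Sum>i\<in>UNIV. (hinge_active a i - a i)\<^sup>2) \<le> real CARD('n)"
proof -
  have "(hinge_active a i - a i)\<^sup>2 \<le> 1" for i
    using assms by (auto simp: dual_feasible_def hinge_active_def abs_square_le_1)
  then show ?thesis
    using sum_mono[of UNIV "\<lambda>i. (hinge_active a i - a i)\<^sup>2" "\<lambda>_. 1"] by simp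
qed

lemma duality_gap_mean_le:
  fixes a :: "'t \<Rightarrow> 'n \<Rightarrow> real"
  assumes "finite S" "S \<noteq> {}"
  defines "c \<equiv> 1 / real (card S)"
  defines "m \<equiv> (\<lambda>i. c * (\<Sum>t\<in>S. a t i))"
  shows "P (w m) - D m \<le> c * (\<Sum>t\<in>S. P (w (a t)) - D (a t))"
proof -
  let ?n = "real CARD('n)"
  have c: "0 < c"
    unfolding c_def using assms(1,2) by (simp add: card_gt_0_iff)
  have w_m: "w m = c *\<^sub>R (\<Sum>t\<in>S. w (a t))"
    unfolding m_def wmap_def
    by (simp add: sum_distrib_left sum_distrib_right scaleR_sum_left scaleR_sum_right sum.swap[of _ S] mult_ac)
  have "max 0 (1 - y i * (w m \<bullet> x i)) \<le> c * (\<Sum>t\<in>S. max 0 (1 - y i * (w (a t) \<bullet> x i)))" for i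
  proof -
    have "1 - y i * (w m \<bullet> x i) = c * (\<Sum>t\<in>S. 1 - y i * (w (a t) \<bullet> x i))"
      unfolding w_m c_def using assms(1,2)
      by (simp add: inner_sum_left sum_subtractf sum_distrib_left card_gt_0_iff field_simps)
    then show ?thesis
      using max_0_mean_le[OF assms(1,2)] unfolding c_def by simp
  qed
  from sum_mono[of UNIV, OF this]
  have hinge: "(\<Sum>i\<in>UNIV. max 0 (1 - y i * (w m \<bullet> x i)))
      \<le> c * (\<Sum>t\<in>S. \<Sum>i\<in>UNIV. max 0 (1 - y i * (w (a t) \<bullet> x i)))"
    by (simp add: sum_distrib_left sum.swap[of _ S])
  have norm: "(norm (w m))\<^sup>2 \<le> c * (\<Sum>t\<in>S. (norm (w (a t)))\<^sup>2)"
    unfolding w_m c_def by (rule norm_mean_squared_le[OF assms(1,2)])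
  have linear: "(\<Sum>i\<in>UNIV. m i) = c * (\<Sum>t\<in>S. \<Sum>i\<in>UNIV. a t i)"
    unfolding m_def by (simp add: sum_distrib_left sum.swap[of _ S])
  have "P (w m) - D m \<le> (1 / ?n) * (c * (\<Sum>t\<in>S. \<Sum>i\<in>UNIV. max 0 (1 - y i * (w (a t) \<bullet> x i))))
      + lam * (c * (\<Sum>t\<in>S. (norm (w (a t)))\<^sup>2)) - (1 / ?n) * (c * (\<Sum>t\<in>S. \<Sum>i\<in>UNIV. a t i))"
    unfolding duality_gap_eq linear using hinge norm lam_pos c
    by (intro diff_mono add_mono mult_left_mono) simp_all
  also have "\<dots> = c * (\<Sum>t\<in>S. P (w (a t)) - D (a t))"
    unfolding duality_gap_eq
    by (simp add: sum.distrib sum_subtractf sum_distrib_left sum_divide_distrib algebra_simps)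
  finally show ?thesis .
qed

lemma dual_add:
  "D (\<lambda>i. a i + d i) = D a + (1 / real CARD('n)) * (\<Sum>i\<in>UNIV. d i * (1 - y i * (w a \<bullet> x i)))
     - lam / 2 * (norm (w d))\<^sup>2"
proof -
  have "lam * (w a \<bullet> w d) = (1 / real CARD('n)) * (\<Sum>i\<in>UNIV. d i * (y i * (w a \<bullet> x i)))"
    using lam_pos by (simp add: sum_weighted_margins)
  then show ?thesis
    unfolding dual_eq_norm_wmap wmap_add power2_norm_eq_inner
    by (simp add: inner_add_left inner_add_right inner_commute sum.distrib right_diff_distrib
        sum_subtractf algebra_simps)
qed

end

section \<open>Mini-batch SDCA\<close>

lemma norm_sum_scaleR_squared_le_spectral_norm:
  fixes x :: "'n::finite \<Rightarrow> 'd::euclidean_space"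
  shows "(norm (\<Sum>i\<in>UNIV. c i *\<^sub>R x i))\<^sup>2 \<le> (spectral_norm x)\<^sup>2 * (\<Sum>i\<in>UNIV. (c i)\<^sup>2)"
proof -
  let ?X = "\<lambda>a::real^'n. \<Sum>i\<in>UNIV. (a $ i) *\<^sub>R x i"
  let ?c = "\<chi> i. c i"
  have "linear ?X"
    unfolding linear_iff by (simp add: sum.distrib scaleR_add_left scaleR_sum_right)
  then have "norm (?X ?c) \<le> onorm ?X * norm ?c"
    by (intro onorm linear_conv_bounded_linear[THEN iffD1])
  then have "(norm (?X ?c))\<^sup>2 \<le> (onorm ?X * norm ?c)\<^sup>2"
    by (rule power_mono) simp
  moreover have "(norm ?c)\<^sup>2 = (\<Sum>i\<in>UNIV. (c i)\<^sup>2)"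
    unfolding power2_norm_eq_inner by (simp add: inner_vec_def power2_eq_square)
  ultimately show ?thesis
    by (simp add: spectral_norm_def power_mult_distrib)
qed

lemma clip_maximizes_concave_quadratic:
  fixes c :: real
  assumes "lo \<le> v" "v \<le> hi" "0 \<le> c"
  shows "2 * c * z * v - c * v\<^sup>2 \<le> 2 * c * z * clip lo hi z - c * (clip lo hi z)\<^sup>2"
proof -
  have "\<bar>clip lo hi z - z\<bar> \<le> \<bar>v - z\<bar>"
    using assms(1,2) by (auto simp: clip_def max_def min_def abs_if)
  then have "(clip lo hi z - z)\<^sup>2 \<le> (v - z)\<^sup>2"
    by (simp add: abs_le_square_iff)
  moreover have "2 * c * z * t - c * t\<^sup>2 = c * z\<^sup>2 - c * (t - z)\<^sup>2" for t
    by (simp add: power2_eq_square algebra_simps)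
  ultimately show ?thesis
    using mult_left_mono[of _ _ c] assms(3) by simp
qed

locale minibatch_sdca = svm_dual x y lam for x :: "'n::finite \<Rightarrow> 'd::euclidean_space" and y lam +
  fixes b :: nat and sigma2 beta :: real
  assumes norm_x_le: "\<forall>i. norm (x i) \<le> 1"
    and sigma2_ge: "(spectral_norm x)\<^sup>2 / real CARD('n) \<le> sigma2"
    and b_ge: "1 \<le> b" and b_le: "b \<le> CARD('n)"
    and beta_def: "beta = 1 + (real b - 1) * (real CARD('n) * sigma2 - 1) / (real CARD('n) - 1)"
    and beta_pos: "0 < beta"
begin

definition coordinate_step :: "('n \<Rightarrow> real) \<Rightarrow> 'n \<Rightarrow> real" where
  "coordinate_step a i = clip (- a i) (1 - a i) (lam * real CARD('n) * (1 - y i * (w a \<bullet> x i)) / beta)"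

definition sdca_step :: "('n \<Rightarrow> real) \<Rightarrow> 'n set \<Rightarrow> 'n \<Rightarrow> real" where
  "sdca_step a A = (\<lambda>i. a i + (if i \<in> A then coordinate_step a i else 0))"

lemma sdca_iter_Suc: "sdca_iter x y lam beta As (Suc t) = sdca_step (sdca_iter x y lam beta As t) (As t)"
  by (simp add: sdca_step_def coordinate_step_def Let_def fun_eq_iff)

lemma dual_feasible_sdca_step: "dual_feasible a \<Longrightarrow> dual_feasible (sdca_step a A)"
  unfolding dual_feasible_def sdca_step_def coordinate_step_def clip_def by auto

lemma dual_feasible_sdca_iter: "dual_feasible (sdca_iter x y lam beta As t)"
proof (induction t)
  case 0
  show ?case by (simp add: dual_feasible_def)
next
  case (Suc t)
  then show ?case
    unfolding sdca_iter_Suc by (rule dual_feasible_sdca_step)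
qed

lemma dual_feasible_alpha_bar: "dual_feasible (alpha_bar x y lam beta T\<^sub>0 T As)"
proof (cases "T\<^sub>0 < T")
  case True
  then show ?thesis
    using dual_feasible_average[of "{T\<^sub>0..<T}" "sdca_iter x y lam beta As"] dual_feasible_sdca_iter
    unfolding alpha_bar_def by simp
next
  case False
  then show ?thesis
    by (simp add: alpha_bar_def dual_feasible_def)
qed

lemma expectation_norm_batch_le:
  "measure_pmf.expectation (batch_pmf b) (\<lambda>A. (norm (\<Sum>i\<in>A. (h i * y i) *\<^sub>R x i))\<^sup>2)
     \<le> real b / real CARD('n) * beta * (\<Sum>i\<in>UNIV. (h i)\<^sup>2)"
proof -
  have "(norm ((h i * y i) *\<^sub>R x i))\<^sup>2 \<le> (h i)\<^sup>2" for i
  proof -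
    have "(norm ((h i * y i) *\<^sub>R x i))\<^sup>2 = (h i)\<^sup>2 * (norm (x i))\<^sup>2"
      using label_squared[of i] by (simp add: power_mult_distrib power2_eq_square)
    also have "\<dots> \<le> (h i)\<^sup>2"
      using norm_x_le by (simp add: mult_left_le power_le_one)
    finally show ?thesis .
  qed
  moreover have "(norm (\<Sum>i\<in>UNIV. (h i * y i) *\<^sub>R x i))\<^sup>2 \<le> real CARD('n) * sigma2 * (\<Sum>i\<in>UNIV. (h i)\<^sup>2)"
  proof -
    have "(norm (\<Sum>i\<in>UNIV. (h i * y i) *\<^sub>R x i))\<^sup>2 \<le> (spectral_norm x)\<^sup>2 * (\<Sum>i\<in>UNIV. (h i * y i)\<^sup>2)"
      by (rule norm_sum_scaleR_squared_le_spectral_norm)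
    also have "(\<Sum>i\<in>UNIV. (h i * y i)\<^sup>2) = (\<Sum>i\<in>UNIV. (h i)\<^sup>2)"
      using label_squared by (simp add: power2_eq_square mult_ac)
    also have "(spectral_norm x)\<^sup>2 * (\<Sum>i\<in>UNIV. (h i)\<^sup>2) \<le> real CARD('n) * sigma2 * (\<Sum>i\<in>UNIV. (h i)\<^sup>2)"
      using sigma2_ge by (intro mult_right_mono) (simp_all add: field_simps sum_nonneg)
    finally show ?thesis .
  qed
  ultimately show ?thesis
    unfolding beta_def by (rule expectation_norm_batch_sum_le[OF b_ge b_le])
qed

lemma dual_sdca_step_eq:
  "D (sdca_step a A) = D a + 1 / real CARD('n) * (\<Sum>i\<in>A. coordinate_step a i * (1 - y i * (w a \<bullet> x i)))
     - 1 / (2 * lam * (real CARD('n))\<^sup>2) * (norm (\<Sum>i\<in>A. (coordinate_step a i * y i) *\<^sub>R x i))\<^sup>2"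
proof -
  let ?d = "\<lambda>i. if i \<in> A then coordinate_step a i else 0"
  have "(\<Sum>i\<in>UNIV. ?d i * (1 - y i * (w a \<bullet> x i))) = (\<Sum>i\<in>A. coordinate_step a i * (1 - y i * (w a \<bullet> x i)))"
    by (simp add: if_distrib[of "\<lambda>z. z * _"] sum.If_cases)
  moreover have "(?d i * y i) *\<^sub>R x i = (if i \<in> A then (coordinate_step a i * y i) *\<^sub>R x i else 0)" for i
    by simp
  then have "w ?d = (1 / (lam * real CARD('n))) *\<^sub>R (\<Sum>i\<in>A. (coordinate_step a i * y i) *\<^sub>R x i)"
    by (simp add: wmap_def sum.If_cases)
  ultimately show ?thesis
    unfolding sdca_step_def dual_add using lam_pos by (simp add: power_mult_distrib power2_eq_square)
qed

lemma expectation_dual_sdca_step_ge_separable: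
  "D a + real b / real CARD('n) *
       (1 / real CARD('n) * (\<Sum>i\<in>UNIV. coordinate_step a i * (1 - y i * (w a \<bullet> x i)))
        - beta / (2 * lam * (real CARD('n))\<^sup>2) * (\<Sum>i\<in>UNIV. (coordinate_step a i)\<^sup>2))
     \<le> measure_pmf.expectation (batch_pmf b) (\<lambda>A. D (sdca_step a A))"
proof -
  let ?n = "real CARD('n)"
  let ?h = "coordinate_step a"
  let ?g = "\<lambda>i. 1 - y i * (w a \<bullet> x i)"
  let ?k = "1 / (2 * lam * ?n\<^sup>2)"
  have "measure_pmf.expectation (batch_pmf b) (\<lambda>A. D (sdca_step a A))
      = D a + 1 / ?n * measure_pmf.expectation (batch_pmf b) (\<lambda>A. \<Sum>i\<in>A. ?h i * ?g i)
        - ?k * measure_pmf.expectation (batch_pmf b) (\<lambda>A. (norm (\<Sum>i\<in>A. (?h i * y i) *\<^sub>R x i))\<^sup>2)"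
    unfolding dual_sdca_step_eq by (simp add: integrable_measure_pmf_finite)
  also have "\<dots> \<ge> D a + 1 / ?n * (real b / ?n * (\<Sum>i\<in>UNIV. ?h i * ?g i))
        - ?k * (real b / ?n * beta * (\<Sum>i\<in>UNIV. (?h i)\<^sup>2))"
    unfolding expectation_batch_sum[OF b_ge b_le]
    using expectation_norm_batch_le[of ?h] lam_pos by (intro diff_left_mono mult_left_mono) simp_all
  also have "D a + 1 / ?n * (real b / ?n * G) - ?k * (real b / ?n * beta * H)
      = D a + real b / ?n * (1 / ?n * G - beta / (2 * lam * ?n\<^sup>2) * H)" for G H
    by (simp add: algebra_simps)
  finally show ?thesis .
qed

lemma coordinate_step_maximizes:
  assumes "- a i \<le> v" "v \<le> 1 - a i"
  shows "(1 - y i * (w a \<bullet> x i)) / real CARD('n) * v - beta / (2 * lam * (real CARD('n))\<^sup>2) * v\<^sup>2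
     \<le> (1 - y i * (w a \<bullet> x i)) / real CARD('n) * coordinate_step a i
        - beta / (2 * lam * (real CARD('n))\<^sup>2) * (coordinate_step a i)\<^sup>2"
proof -
  let ?n = "real CARD('n)"
  let ?c = "beta / (2 * lam * ?n\<^sup>2)"
  let ?z = "lam * ?n * (1 - y i * (w a \<bullet> x i)) / beta"
  have c: "0 \<le> ?c"
    using lam_pos beta_pos by simp
  have slope: "2 * ?c * ?z = (1 - y i * (w a \<bullet> x i)) / ?n"
    using lam_pos beta_pos by (simp add: power2_eq_square)
  from clip_maximizes_concave_quadratic[OF assms c, of ?z]
  show ?thesis
    unfolding coordinate_step_def slope .
qed

lemma coordinate_step_gain_ge:
  assumes "dual_feasible a" "0 \<le> s" "s \<le> 1"
  shows "s * (P (w a) - D a) - s\<^sup>2 * beta / (2 * lam * real CARD('n))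
     \<le> 1 / real CARD('n) * (\<Sum>i\<in>UNIV. coordinate_step a i * (1 - y i * (w a \<bullet> x i)))
        - beta / (2 * lam * (real CARD('n))\<^sup>2) * (\<Sum>i\<in>UNIV. (coordinate_step a i)\<^sup>2)"
proof -
  let ?n = "real CARD('n)"
  let ?c = "beta / (2 * lam * ?n\<^sup>2)"
  let ?g = "\<lambda>i. 1 - y i * (w a \<bullet> x i)"
  let ?u = "\<lambda>i. hinge_active a i - a i"
  have c: "0 \<le> ?c"
    using lam_pos beta_pos by simp
  have a: "0 \<le> a i" "a i \<le> 1" for i
    using assms(1) by (auto simp: dual_feasible_def)
  \<comment> \<open>Compare the clipped steps with the feasible steps \<open>s ?u\<close>.\<close>
  have term_le: "?g i / ?n * (s * ?u i) - ?c * (s * ?u i)\<^sup>2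
      \<le> ?g i / ?n * coordinate_step a i - ?c * (coordinate_step a i)\<^sup>2" for i
  proof (rule coordinate_step_maximizes)
    have "s * a i \<le> a i" "s * (1 - a i) \<le> 1 - a i" "0 \<le> s * a i" "0 \<le> s * (1 - a i)"
      using a[of i] assms(2,3) by (simp_all add: mult_left_le_one_le)
    then show "- a i \<le> s * ?u i" "s * ?u i \<le> 1 - a i"
      by (auto simp: hinge_active_def algebra_simps)
  qed
  have "?c * s\<^sup>2 * (\<Sum>i\<in>UNIV. (?u i)\<^sup>2) \<le> ?c * s\<^sup>2 * ?n"
    using c sum_squared_hinge_active_diff_le[OF assms(1)] by (intro mult_left_mono mult_nonneg_nonneg) auto
  moreover have "?c * s\<^sup>2 * ?n = s\<^sup>2 * beta / (2 * lam * ?n)"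
    by (simp add: power2_eq_square mult_ac)
  ultimately have "s * (P (w a) - D a) - s\<^sup>2 * beta / (2 * lam * ?n)
      \<le> s * (P (w a) - D a) - ?c * s\<^sup>2 * (\<Sum>i\<in>UNIV. (?u i)\<^sup>2)"
    by linarith
  also have "\<dots> = (\<Sum>i\<in>UNIV. ?g i / ?n * (s * ?u i) - ?c * (s * ?u i)\<^sup>2)"
    unfolding duality_gap_eq_hinge_active
    by (simp add: sum_subtractf sum_distrib_left sum_divide_distrib power_mult_distrib mult_ac)
  also have "\<dots> \<le> (\<Sum>i\<in>UNIV. ?g i / ?n * coordinate_step a i - ?c * (coordinate_step a i)\<^sup>2)"
    by (rule sum_mono) (rule term_le)
  also have "\<dots> = 1 / ?n * (\<Sum>i\<in>UNIV. coordinate_step a i * ?g i) - ?c * (\<Sum>i\<in>UNIV. (coordinate_step a i)\<^sup>2)"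
    by (simp add: sum_subtractf sum_distrib_left sum_divide_distrib mult_ac)
  finally show ?thesis .
qed

lemma expectation_dual_sdca_step_ge:
  assumes "dual_feasible a" "0 \<le> s" "s \<le> 1"
  shows "D a + real b / real CARD('n) * (s * (P (w a) - D a) - s\<^sup>2 * beta / (2 * lam * real CARD('n)))
     \<le> measure_pmf.expectation (batch_pmf b) (\<lambda>A. D (sdca_step a A))"
  using mult_left_mono[OF coordinate_step_gain_ge[OF assms], of "real b / real CARD('n)"]
    expectation_dual_sdca_step_ge_separable[of a]
  by simp

abbreviation iterate_pmf :: "nat \<Rightarrow> ('n \<Rightarrow> real) pmf" where
  "iterate_pmf \<equiv> random_iteration_pmf sdca_step (batch_pmf b) (\<lambda>_. 0)"

lemma map_pmf_sdca_iter_schedule_pmf: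
  "t \<le> T \<Longrightarrow> map_pmf (\<lambda>As. sdca_iter x y lam beta As t) (schedule_pmf b T) = iterate_pmf t"
  unfolding schedule_pmf_def
  by (rule map_pmf_iteration_Pi_pmf[where it = "sdca_iter x y lam beta", OF _ sdca_iter_Suc]) simp_all

lemma finite_set_iterate_pmf: "finite (set_pmf (iterate_pmf t))"
  by (rule finite_set_random_iteration_pmf) simp

lemma dual_feasible_iterate_pmf:
  assumes "a \<in> set_pmf (iterate_pmf t)"
  shows "dual_feasible a"
proof -
  have "dual_feasible (\<lambda>_::'n. 0::real)"
    by (simp add: dual_feasible_def)
  then show ?thesis
    using set_random_iteration_pmf_invariant[of dual_feasible "\<lambda>_. 0" sdca_step a "batch_pmf b" t]
      dual_feasible_sdca_step assms by blast
qed

definition expected_dual :: "nat \<Rightarrow> real" where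
  "expected_dual t = measure_pmf.expectation (iterate_pmf t) D"

definition expected_gap :: "nat \<Rightarrow> real" where
  "expected_gap t = measure_pmf.expectation (iterate_pmf t) (\<lambda>a. P (w a) - D a)"

lemma expected_dual_Suc_ge:
  assumes "0 \<le> s" "s \<le> 1"
  shows "expected_dual t + real b / real CARD('n) * (s * expected_gap t - s\<^sup>2 * beta / (2 * lam * real CARD('n)))
     \<le> expected_dual (Suc t)"
proof -
  let ?q = "real b / real CARD('n)"
  let ?K = "s\<^sup>2 * beta / (2 * lam * real CARD('n))"
  have "expected_dual t + ?q * (s * expected_gap t - ?K)
      = measure_pmf.expectation (iterate_pmf t) (\<lambda>a. D a + ?q * (s * (P (w a) - D a) - ?K))"
    unfolding expected_dual_def expected_gap_def
    by (simp add: integrable_measure_pmf_finite[OF finite_set_iterate_pmf])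
  also have "\<dots> \<le> measure_pmf.expectation (iterate_pmf t)
      (\<lambda>a. measure_pmf.expectation (batch_pmf b) (\<lambda>A. D (sdca_step a A)))"
    using finite_set_iterate_pmf
    by (rule expectation_mono_finite_pmf)
      (rule expectation_dual_sdca_step_ge[OF dual_feasible_iterate_pmf assms])
  also have "\<dots> = expected_dual (Suc t)"
    unfolding expected_dual_def by (rule expectation_random_iteration_pmf_Suc[symmetric]) simp
  finally show ?thesis .
qed

lemma expected_dual_le_primal: "expected_dual t \<le> P v"
proof -
  have "expected_dual t \<le> measure_pmf.expectation (iterate_pmf t) (\<lambda>_. P v)"
    unfolding expected_dual_def using finite_set_iterate_pmf
    by (rule expectation_mono_finite_pmf) (rule weak_duality[OF dual_feasible_iterate_pmf])
  then show ?thesis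
    by simp
qed

lemma primal_minus_expected_dual_le_expected_gap:
  assumes "\<forall>v. P w_opt \<le> P v"
  shows "P w_opt - expected_dual t \<le> expected_gap t"
proof -
  have "measure_pmf.expectation (iterate_pmf t) (\<lambda>a. P w_opt - D a) \<le> expected_gap t"
    unfolding expected_gap_def using finite_set_iterate_pmf
    by (rule expectation_mono_finite_pmf) (use assms in simp)
  then show ?thesis
    unfolding expected_dual_def by (simp add: integrable_measure_pmf_finite[OF finite_set_iterate_pmf])
qed

lemma gap_recursion_sdca:
  assumes "\<forall>v. P w_opt \<le> P v"
  shows "gap_recursion (\<lambda>t. P w_opt - expected_dual t) expected_gap
           (real b / real CARD('n)) (beta / (2 * lam * real CARD('n)))"
proof
  show "0 < real b / real CARD('n)" "real b / real CARD('n) \<le> 1"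
    using b_ge b_le by auto
  show "0 < beta / (2 * lam * real CARD('n))"
    using beta_pos lam_pos by simp
  show "P w_opt - expected_dual (Suc t) \<le> P w_opt - expected_dual t
      - real b / real CARD('n) * (s * expected_gap t - s\<^sup>2 * (beta / (2 * lam * real CARD('n))))"
    if "0 \<le> s" "s \<le> 1" for s t
    using expected_dual_Suc_ge[OF that, of t] by simp
  show "P w_opt - expected_dual t \<le> expected_gap t" for t
    using assms by (rule primal_minus_expected_dual_le_expected_gap)
  show "0 \<le> P w_opt - expected_dual t" for t
    using expected_dual_le_primal by simp
qed

lemma expectation_primal_alpha_bar_le:
  "measure_pmf.expectation (schedule_pmf b T) (\<lambda>As. P (w (alpha_bar x y lam beta T\<^sub>0 T As))) - P v
     \<le> measure_pmf.expectation (schedule_pmf b T)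
           (\<lambda>As. P (w (alpha_bar x y lam beta T\<^sub>0 T As)) - D (alpha_bar x y lam beta T\<^sub>0 T As))"
proof -
  have "measure_pmf.expectation (schedule_pmf b T) (\<lambda>As. D (alpha_bar x y lam beta T\<^sub>0 T As))
      \<le> measure_pmf.expectation (schedule_pmf b T) (\<lambda>_ :: nat \<Rightarrow> 'n set. P v)"
    using finite_set_schedule_pmf by (rule expectation_mono_finite_pmf) (rule weak_duality[OF dual_feasible_alpha_bar])
  then show ?thesis
    by (simp add: integrable_measure_pmf_finite[OF finite_set_schedule_pmf])
qed

lemma expectation_gap_alpha_bar_le:
  assumes "T\<^sub>0 < T"
  shows "measure_pmf.expectation (schedule_pmf b T)
           (\<lambda>As. P (w (alpha_bar x y lam beta T\<^sub>0 T As)) - D (alpha_bar x y lam beta T\<^sub>0 T As))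
     \<le> (1 / real (T - T\<^sub>0)) * (\<Sum>t\<in>{T\<^sub>0..<T}. expected_gap t)"
proof -
  let ?E = "measure_pmf.expectation (schedule_pmf b T :: (nat \<Rightarrow> 'n set) pmf)"
  let ?gap = "\<lambda>a. P (w a) - D a"
  let ?it = "sdca_iter x y lam beta"
  have "?E (\<lambda>As. ?gap (alpha_bar x y lam beta T\<^sub>0 T As))
      \<le> ?E (\<lambda>As. (1 / real (T - T\<^sub>0)) * (\<Sum>t\<in>{T\<^sub>0..<T}. ?gap (?it As t)))"
    using finite_set_schedule_pmf
  proof (rule expectation_mono_finite_pmf)
    fix As
    show "?gap (alpha_bar x y lam beta T\<^sub>0 T As) \<le> (1 / real (T - T\<^sub>0)) * (\<Sum>t\<in>{T\<^sub>0..<T}. ?gap (?it As t))"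
      using duality_gap_mean_le[of "{T\<^sub>0..<T}" "?it As"] assms unfolding alpha_bar_def by simp
  qed
  also have "\<dots> = (1 / real (T - T\<^sub>0)) * (\<Sum>t\<in>{T\<^sub>0..<T}. ?E (\<lambda>As. ?gap (?it As t)))"
    by (simp add: integrable_measure_pmf_finite[OF finite_set_schedule_pmf])
  also have "\<dots> = (1 / real (T - T\<^sub>0)) * (\<Sum>t\<in>{T\<^sub>0..<T}. expected_gap t)"
  proof -
    have "?E (\<lambda>As. ?gap (?it As t)) = expected_gap t" if "t \<in> {T\<^sub>0..<T}" for t
      using map_pmf_sdca_iter_schedule_pmf[of t T, symmetric] that unfolding expected_gap_def by simp
    then show ?thesis
      by simp
  qed
  finally show ?thesis .
qed

lemma expectation_gap_alpha_bar_le_eps: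
  fixes eps :: real and t\<^sub>0 T\<^sub>0 T :: nat
  defines "n \<equiv> real CARD('n)"
  assumes w_opt: "\<forall>v. P w_opt \<le> P v" and eps: "0 < eps"
    and t0: "int t\<^sub>0 \<ge> max 0 (ceiling (n / real b * ln (2 * lam * n / beta)))"
    and T0: "real T\<^sub>0 \<ge> real t\<^sub>0 + beta / real b * max 0 (4 / (lam * eps) - 2 * n / beta)"
    and T: "real T \<ge> real T\<^sub>0 + max (real_of_int (ceiling (n / real b))) (beta / real b * (1 / (lam * eps)))"
  shows "measure_pmf.expectation (schedule_pmf b T)
           (\<lambda>As. P (w (alpha_bar x y lam beta T\<^sub>0 T As)) - D (alpha_bar x y lam beta T\<^sub>0 T As)) \<le> eps"
proof -
  interpret gap_recursion "\<lambda>t. P w_opt - expected_dual t" expected_gap "real b / n" "beta / (2 * lam * n)"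
    unfolding n_def using w_opt by (rule gap_recursion_sdca)
  have pos: "0 < real b" "0 < n"
    using b_ge unfolding n_def by simp_all
  note conditions = schedule_t0_T0_conditions[OF pos lam_pos beta_pos eps t0 T0]
    schedule_T_conditions[OF pos lam_pos beta_pos eps T]
  have "P w_opt - expected_dual 0 \<le> 1"
    using w_opt[rule_format, of 0] by (simp add: expected_dual_def dual_def primal_def)
  from average_g_le_eps[OF this eps conditions]
  have "(1 / real (T - T\<^sub>0)) * (\<Sum>t\<in>{T\<^sub>0..<T}. expected_gap t) \<le> eps" .
  moreover have "T - T\<^sub>0 \<noteq> 0"
    using conditions(4) by (intro notI) simp
  ultimately show ?thesis
    using expectation_gap_alpha_bar_le[of T\<^sub>0 T] by simp
qed

end

theorem theorem2:
  fixes x :: "'n::finite \<Rightarrow> 'd::euclidean_space"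
    and y :: "'n \<Rightarrow> real"
    and sigma2 lam eps :: real
    and b t0 T0 T :: nat
    and wstar :: 'd
  defines "n \<equiv> real CARD('n)"
  defines "beta \<equiv> 1 + (real b - 1) * (n * sigma2 - 1) / (n - 1)"
  assumes n_ge: "CARD('n) \<ge> 2"
    and y_pm: "\<forall>i. y i \<in> {-1, 1}"
    and x_norm: "\<forall>i. norm (x i) \<le> 1"
    and sigma: "sigma2 \<ge> (spectral_norm x)\<^sup>2 / n"
    and lam_pos: "lam > 0"
    and b_range: "1 \<le> b" "b \<le> CARD('n)"
    and beta_pos: "beta > 0"
    and wstar_min: "\<forall>w. primal x y lam wstar \<le> primal x y lam w"
    and eps_pos: "eps > 0"
    and t0_ge: "int t0 \<ge> max 0 (ceiling (n / real b * ln (2 * lam * n / beta)))"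
    and T0_ge: "real T0 \<ge> real t0 + beta / real b * max 0 (4 / (lam * eps) - 2 * n / beta)"
    and T_ge: "real T \<ge> real T0 + max (real_of_int (ceiling (n / real b))) (beta / real b * (1 / (lam * eps)))"
  shows "measure_pmf.expectation (schedule_pmf b T)
            (\<lambda>As. primal x y lam (wmap x y lam (alpha_bar x y lam beta T0 T As)))
           - primal x y lam wstar
         \<le> measure_pmf.expectation (schedule_pmf b T)
            (\<lambda>As. primal x y lam (wmap x y lam (alpha_bar x y lam beta T0 T As))
                  - dual x y lam (alpha_bar x y lam beta T0 T As))
       \<and> measure_pmf.expectation (schedule_pmf b T)
            (\<lambda>As. primal x y lam (wmap x y lam (alpha_bar x y lam beta T0 T As))
                  - dual x y lam (alpha_bar x y lam beta T0 T As))
         \<le> eps"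
proof -
  interpret minibatch_sdca x y lam b sigma2 beta
    by unfold_locales (use y_pm x_norm sigma lam_pos b_range beta_pos in \<open>simp_all add: n_def beta_def\<close>)
  show ?thesis
    using expectation_primal_alpha_bar_le
      expectation_gap_alpha_bar_le_eps[OF wstar_min eps_pos t0_ge[unfolded n_def] T0_ge[unfolded n_def]
        T_ge[unfolded n_def]]
    by blast
qed

end
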